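(* There is an absolute constant $c>0$ such that for infinitely many $n$ there exist integers $b_1,\dots,b_n\ge 0$ with $b_1+\dots+b_n=n-1$ such that $(b_1,\dots,b_n)$-BG has an equilibrium graph in the MAX version with diameter at least $cn$.
   Context: Bounded budget network creation game $(b_1,\dots,b_n)$-BG: $n$ players with integer budgets $0\le b_i\le n-1$. A strategy of player $i$ is a set $S_i\subseteq\{1,\dots,n\}\setminus\{i\}$ with $|S_i|=b_i$; a profile is realized by the directed graph $G$ on $u_1,\dots,u_n$ with an arc $\overrightarrow{u_iu_j}$ iff $j\in S_i$. $U(G)$ is the undirected multigraph obtained by ignoring directions; $\operatorname{dist}(u,v)$ is the distance in $U(G)$, defined as $n^2$ between different components. MAX cost: $c_{MAX}(u)=\max_v\operatorname{dist}(u,v)+(\kappa-1)n^2$, $\kappa$ the number of components of $U(G)$. An equilibrium graph in the MAX version is a realization in which no vertex can decrease its MAX cost by changing its own strategy while the other strategies are fixed. The diameter is the maximum distance between two vertices. *)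

theory Defs
  imports Complex_Main
begin

text \<open>Vertices are 0..<n; a profile is S :: nat \<Rightarrow> nat set, S i being the strategy of player i.
  U(G) has an edge between u and v iff v \<in> S u or u \<in> S v.\<close>

definition adj :: "nat \<Rightarrow> (nat \<Rightarrow> nat set) \<Rightarrow> nat \<Rightarrow> nat \<Rightarrow> bool" where
  "adj n S u v \<longleftrightarrow> u < n \<and> v < n \<and> (v \<in> S u \<or> u \<in> S v)"

fun walk :: "nat \<Rightarrow> (nat \<Rightarrow> nat set) \<Rightarrow> nat \<Rightarrow> nat \<Rightarrow> nat \<Rightarrow> bool" where
  "walk n S 0 u v \<longleftrightarrow> u = v"
| "walk n S (Suc k) u v \<longleftrightarrow> (\<exists>w. walk n S k u w \<and> adj n S w v)"

definition connected_in :: "nat \<Rightarrow> (nat \<Rightarrow> nat set) \<Rightarrow> nat \<Rightarrow> nat \<Rightarrow> bool" where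
  "connected_in n S u v \<longleftrightarrow> (\<exists>k. walk n S k u v)"

definition gdist :: "nat \<Rightarrow> (nat \<Rightarrow> nat set) \<Rightarrow> nat \<Rightarrow> nat \<Rightarrow> nat" where
  "gdist n S u v = (if connected_in n S u v then (LEAST k. walk n S k u v) else n^2)"

definition num_components :: "nat \<Rightarrow> (nat \<Rightarrow> nat set) \<Rightarrow> nat" where
  "num_components n S = card ({0..<n} // {(u, v). u < n \<and> v < n \<and> connected_in n S u v})"

definition cost_max :: "nat \<Rightarrow> (nat \<Rightarrow> nat set) \<Rightarrow> nat \<Rightarrow> nat" where
  "cost_max n S u = Max {gdist n S u v | v. v < n} + (num_components n S - 1) * n^2"

definition strategy :: "nat \<Rightarrow> (nat \<Rightarrow> nat) \<Rightarrow> nat \<Rightarrow> nat set \<Rightarrow> bool" where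
  "strategy n b i T \<longleftrightarrow> T \<subseteq> {0..<n} - {i} \<and> card T = b i"

definition profile :: "nat \<Rightarrow> (nat \<Rightarrow> nat) \<Rightarrow> (nat \<Rightarrow> nat set) \<Rightarrow> bool" where
  "profile n b S \<longleftrightarrow> (\<forall>i<n. strategy n b i (S i))"

definition max_equilibrium :: "nat \<Rightarrow> (nat \<Rightarrow> nat) \<Rightarrow> (nat \<Rightarrow> nat set) \<Rightarrow> bool" where
  "max_equilibrium n b S \<longleftrightarrow> profile n b S \<and>
     (\<forall>i<n. \<forall>T. strategy n b i T \<longrightarrow> cost_max n S i \<le> cost_max n (S(i := T)) i)"

definition diameter :: "nat \<Rightarrow> (nat \<Rightarrow> nat set) \<Rightarrow> nat" where
  "diameter n S = Max {gdist n S u v | u v. u < n \<and> v < n}"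

end

theory Submission
  imports Defs "HOL-Library.Infinite_Set"
begin

text \<open>The equilibrium is a spider: a root 0 with three legs of length \<open>k\<close>, so \<open>n = 3k + 1\<close>
  and the diameter is \<open>2k\<close>. Each leg vertex buys the edge to its child, and the three vertices
  next to the root also buy the edge to the root; the leaves and the root buy nothing, for a
  total budget of \<open>3k = n - 1\<close>. A vertex at depth \<open>d\<close> has eccentricity \<open>d + k\<close>. A deviating
  vertex must keep an edge into its own subtree, and a vertex next to the root must also keep an
  edge leaving its leg, since otherwise the graph falls apart. Under these constraints a
  1-Lipschitz potential shows that the leaf of a third leg still lies at distance \<open>d + k\<close>, so no
  deviation pays off.\<close>

lemma adj_commute: "adj n S u v \<longleftrightarrow> adj n S v u"
  by (auto simp: adj_def)

lemma walk_append: "walk n S a u w \<Longrightarrow> walk n S b w v \<Longrightarrow> walk n S (a + b) u v"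
  by (induction b arbitrary: v) auto

lemma walk_Cons: "adj n S u w \<Longrightarrow> walk n S k w v \<Longrightarrow> walk n S (Suc k) u v"
  using walk_append[of n S 1 u w k v] by simp

lemma walk_rev: "walk n S k u v \<Longrightarrow> walk n S k v u"
proof (induction k arbitrary: v)
  case (Suc k)
  then obtain w where "walk n S k u w" "adj n S w v" by auto
  then show ?case using Suc.IH adj_commute walk_Cons by metis
qed simp

lemma walk_potential_bound:
  assumes "\<And>x y. adj n S x y \<Longrightarrow> f x \<le> f y + 1" and "walk n S k u v"
  shows "f u \<le> f v + k"
  using assms(2)
proof (induction k arbitrary: v)
  case (Suc k)
  then obtain w where "walk n S k u w" "adj n S w v" by auto
  then show ?case using Suc.IH assms(1)[of w v] by fastforce
qed simp

lemma walk_closed: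
  "(\<And>x y. adj n S x y \<Longrightarrow> x \<in> C \<Longrightarrow> y \<in> C) \<Longrightarrow> walk n S k u v \<Longrightarrow> u \<in> C \<Longrightarrow> v \<in> C"
  by (induction k arbitrary: v) auto

lemma gdist_le_walk: "walk n S k u v \<Longrightarrow> gdist n S u v \<le> k"
  unfolding gdist_def connected_in_def by (auto intro: Least_le)

lemma gdist_ge_potential:
  assumes "\<And>x y. adj n S x y \<Longrightarrow> f x \<le> f y + 1"
  shows "min (n\<^sup>2) (f u - f v) \<le> gdist n S u v"
proof (cases "connected_in n S u v")
  case True
  then have "walk n S (LEAST k. walk n S k u v) u v"
    unfolding connected_in_def by (auto intro: LeastI)
  with walk_potential_bound[OF assms] True show ?thesis
    unfolding gdist_def by fastforce
qed (simp add: gdist_def)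

lemma gdist_separated:
  assumes "\<And>x y. adj n S x y \<Longrightarrow> x \<in> C \<Longrightarrow> y \<in> C" "u \<in> C" "v \<notin> C"
  shows "gdist n S u v = n\<^sup>2"
  using walk_closed[OF assms(1) _ assms(2)] assms(3)
  unfolding gdist_def connected_in_def by auto

lemma gdist_le_cost_max: "v < n \<Longrightarrow> gdist n S u v \<le> cost_max n S u"
proof -
  assume "v < n"
  then have "gdist n S u v \<le> Max {gdist n S u v | v. v < n}"
    by (intro Max_ge) auto
  then show ?thesis unfolding cost_max_def by simp
qed

lemma gdist_le_diameter: "u < n \<Longrightarrow> v < n \<Longrightarrow> gdist n S u v \<le> diameter n S"
proof -
  assume "u < n" "v < n"
  have "{gdist n S u v | u v. u < n \<and> v < n} = (\<lambda>(u, v). gdist n S u v) ` ({..<n} \<times> {..<n})"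
    by auto
  then have "finite {gdist n S u v | u v. u < n \<and> v < n}" by simp
  with \<open>u < n\<close> \<open>v < n\<close> show ?thesis
    unfolding diameter_def by (auto intro: Max_ge)
qed

lemma num_components_eq_1:
  assumes "0 < n" "\<And>u v. u < n \<Longrightarrow> v < n \<Longrightarrow> connected_in n S u v"
  shows "num_components n S = 1"
proof -
  have "{(u, v). u < n \<and> v < n \<and> connected_in n S u v} = {0..<n} \<times> {0..<n}"
    using assms(2) by auto
  moreover have "{0..<n} // ({0..<n} \<times> {0..<n}) = {{0..<n}}"
    unfolding quotient_def using assms(1) by auto
  ultimately show ?thesis unfolding num_components_def by simp
qed

lemma cost_max_le:
  assumes "0 < n" "num_components n S = 1" "\<And>v. v < n \<Longrightarrow> gdist n S u v \<le> B"
  shows "cost_max n S u \<le> B"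
proof -
  have "Max {gdist n S u v | v. v < n} \<le> B"
    using assms(1,3) by (subst Max_le_iff) auto
  with assms(2) show ?thesis unfolding cost_max_def by simp
qed

lemma adj_fun_upd:
  "adj n (S(i := T)) x y \<longleftrightarrow> x < n \<and> y < n \<and>
     ((x \<noteq> i \<and> y \<in> S x) \<or> (x = i \<and> y \<in> T) \<or> (y \<noteq> i \<and> x \<in> S y) \<or> (y = i \<and> x \<in> T))"
  by (auto simp: adj_def)

lemma adj_fun_upd_potential:
  assumes "\<And>x y. x \<noteq> i \<Longrightarrow> y \<in> S x \<Longrightarrow> f x \<le> f y + 1 \<and> f y \<le> f x + 1"
    and "\<And>t. t \<in> T \<Longrightarrow> f i \<le> f t + 1 \<and> f t \<le> f i + 1"
  shows "adj n (S(i := T)) x y \<Longrightarrow> f x \<le> f y + 1"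
  using assms by (auto simp: adj_fun_upd)

lemma adj_fun_upd_closed:
  assumes "\<And>x y. x \<noteq> i \<Longrightarrow> y \<in> S x \<Longrightarrow> x \<in> C \<longleftrightarrow> y \<in> C" "i \<in> C" "T \<subseteq> C"
  shows "adj n (S(i := T)) x y \<Longrightarrow> x \<in> C \<Longrightarrow> y \<in> C"
  using assms by (auto simp: adj_fun_upd)

lemma mod_eq_less_imp_add_le:
  assumes "x mod m = y mod m" "y < x"
  shows "y + m \<le> (x::nat)"
proof -
  have "m dvd x - y"
    using assms mod_eq_dvd_iff_nat[of y x m] by simp
  with assms(2) have "m \<le> x - y"
    by (simp add: dvd_imp_le)
  with assms(2) show ?thesis by linarith
qed

text \<open>Vertex \<open>x \<ge> 1\<close> lies on leg \<open>x mod 3\<close> at depth \<open>\<lceil>x/3\<rceil>\<close>; its child is \<open>x + 3\<close>.\<close>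

definition depth :: "nat \<Rightarrow> nat" where
  "depth x = (x + 2) div 3"

definition same_leg :: "nat \<Rightarrow> nat \<Rightarrow> bool" where
  "same_leg x y \<longleftrightarrow> 1 \<le> x \<and> 1 \<le> y \<and> x mod 3 = y mod 3"

definition descendant :: "nat \<Rightarrow> nat \<Rightarrow> bool" where
  "descendant i y \<longleftrightarrow> same_leg y i \<and> i < y"

definition spider_dist :: "nat \<Rightarrow> nat \<Rightarrow> nat" where
  "spider_dist x y =
     (if same_leg x y then (if depth x \<le> depth y then depth y - depth x else depth x - depth y)
      else depth x + depth y)"

definition spider :: "nat \<Rightarrow> nat \<Rightarrow> nat set" where
  "spider k x =
     (if x = 0 then {} else if x \<le> 3 then {0, x + 3} else if x \<le> 3 * k - 3 then {x + 3} else {})"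

lemma depth_plus_3: "depth (x + 3) = depth x + 1"
  by (simp add: depth_def)

lemma depth_le: "x < 3 * k + 1 \<Longrightarrow> depth x \<le> k"
  by (simp add: depth_def)

lemma depth_top: "1 \<le> x \<Longrightarrow> x \<le> 3 \<Longrightarrow> depth x = 1"
  by (simp add: depth_def)

lemma depth_leaf: "3 * k - 2 \<le> v \<Longrightarrow> v < 3 * k + 1 \<Longrightarrow> depth v = k"
  unfolding depth_def by linarith

lemma same_leg_commute: "same_leg x y \<longleftrightarrow> same_leg y x"
  by (auto simp: same_leg_def)

lemma depth_add_le_square: "i < 3 * k + 1 \<Longrightarrow> depth i + k \<le> (3 * k + 1)\<^sup>2"
  using depth_le[of i k] by (simp add: power2_eq_square)

lemma same_leg_less_imp_add_3_le: "same_leg x y \<Longrightarrow> y < x \<Longrightarrow> y + 3 \<le> x"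
  unfolding same_leg_def by (rule mod_eq_less_imp_add_le) auto

lemma same_leg_zero: "\<not> same_leg 0 y"
  by (simp add: same_leg_def)

lemma same_leg_plus_3: "1 \<le> x \<Longrightarrow> same_leg (x + 3) y \<longleftrightarrow> same_leg x y"
  by (simp add: same_leg_def)

lemma spider_dist_self: "spider_dist v v = 0"
  by (simp add: spider_dist_def same_leg_def depth_def)

context
  fixes k :: nat
  assumes two_le_k: "2 \<le> k"
begin

lemma spider_edge_cases:
  "y \<in> spider k x \<Longrightarrow> (y = 0 \<and> 1 \<le> x \<and> x \<le> 3) \<or> (y = x + 3 \<and> 1 \<le> x \<and> x \<le> 3 * k - 3)"
  using two_le_k by (auto simp: spider_def split: if_splits)

lemma spider_dist_lipschitz:
  assumes "y \<in> spider k x"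
  shows "spider_dist y v \<le> spider_dist x v + 1 \<and> spider_dist x v \<le> spider_dist y v + 1"
  using spider_edge_cases[OF assms]
proof
  assume "y = 0 \<and> 1 \<le> x \<and> x \<le> 3"
  then show ?thesis
    using depth_top[of x] by (auto simp: spider_dist_def same_leg_def depth_def)
next
  assume "y = x + 3 \<and> 1 \<le> x \<and> x \<le> 3 * k - 3"
  then show ?thesis
    using depth_plus_3[of x] by (auto simp: spider_dist_def same_leg_def)
qed

lemma descendant_spider_edge:
  assumes "y \<in> spider k x" "x \<noteq> i" "1 \<le> i"
  shows "descendant i x \<longleftrightarrow> descendant i y"
  using spider_edge_cases[OF assms(1)]
proof
  assume "y = 0 \<and> 1 \<le> x \<and> x \<le> 3"
  then show ?thesis
    using same_leg_less_imp_add_3_le[of x i] assms(3) by (auto simp: descendant_def same_leg_zero)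
next
  assume "y = x + 3 \<and> 1 \<le> x \<and> x \<le> 3 * k - 3"
  then show ?thesis
    using same_leg_less_imp_add_3_le[of i x] same_leg_commute[of x i] same_leg_plus_3[of x i] assms(2)
    by (auto simp: descendant_def linorder_neq_iff)
qed

lemma same_leg_spider_edge:
  assumes "y \<in> spider k x" "x \<noteq> i" "1 \<le> i" "i \<le> 3"
  shows "same_leg x i \<longleftrightarrow> same_leg y i"
  using spider_edge_cases[OF assms(1)]
proof
  assume "y = 0 \<and> 1 \<le> x \<and> x \<le> 3"
  then show ?thesis
    using same_leg_less_imp_add_3_le[of x i] same_leg_less_imp_add_3_le[of i x] same_leg_commute[of x i]
      assms(2-4) by (auto simp: linorder_neq_iff same_leg_zero)
next
  assume "y = x + 3 \<and> 1 \<le> x \<and> x \<le> 3 * k - 3"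
  then show ?thesis using same_leg_plus_3 by simp
qed

lemma card_spider:
  "card (spider k x) =
     (if x = 0 then 0 else if x \<le> 3 then 2 else if x \<le> 3 * k - 3 then 1 else 0)"
  using two_le_k by (auto simp: spider_def)

lemma sum_card_spider: "(\<Sum>x<3 * k + 1. card (spider k x)) = 3 * k"
proof -
  define g :: "nat \<Rightarrow> nat" where "g x = (if x = 0 then 0 else if x \<le> 3 then 2 else if x \<le> 3 * k - 3 then 1 else 0)"
    for x :: nat
  have "(\<Sum>x<3 * k + 1. card (spider k x)) = sum g {0..<3 * k + 1}"
    using card_spider by (simp add: g_def atLeast0LessThan)
  also have "\<dots> = sum g {0..<4} + sum g {4..<3 * k - 2} + sum g {3 * k - 2..<3 * k + 1}"
    using two_le_k sum.atLeastLessThan_concat[of 0 4 "3 * k - 2" g]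
      sum.atLeastLessThan_concat[of 0 "3 * k - 2" "3 * k + 1" g] by simp
  also have "sum g {0..<4} = 6"
    by (simp add: g_def numeral_eq_Suc)
  also have "sum g {4..<3 * k - 2} = sum (\<lambda>_. 1) {4..<3 * k - 2}"
    by (rule sum.cong) (auto simp: g_def)
  also have "sum g {3 * k - 2..<3 * k + 1} = 0"
    using two_le_k by (intro sum.neutral) (auto simp: g_def)
  finally show ?thesis using two_le_k by simp
qed

lemma walk_root_spider: "x < 3 * k + 1 \<Longrightarrow> walk (3 * k + 1) (spider k) (depth x) 0 x"
proof (induction x rule: less_induct)
  case (less x)
  consider "x = 0" | "1 \<le> x" "x \<le> 3" | "3 < x" by linarith
  then show ?case
  proof cases
    case 1
    then show ?thesis by (simp add: depth_def)
  next
    case 2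
    then have "adj (3 * k + 1) (spider k) 0 x"
      using less.prems by (auto simp: adj_def spider_def)
    with 2 show ?thesis by (simp add: depth_top)
  next
    case 3
    then have "walk (3 * k + 1) (spider k) (depth (x - 3)) 0 (x - 3)"
      using less by simp
    moreover have "adj (3 * k + 1) (spider k) (x - 3) x"
      using 3 less.prems by (auto simp: adj_def spider_def)
    ultimately show ?thesis
      using 3 depth_plus_3[of "x - 3"] by auto
  qed
qed

lemma walk_spider:
  "u < 3 * k + 1 \<Longrightarrow> v < 3 * k + 1 \<Longrightarrow> walk (3 * k + 1) (spider k) (depth u + depth v) u v"
  using walk_append[OF walk_rev[OF walk_root_spider] walk_root_spider] by blast

lemma cost_max_spider_le:
  assumes "u < 3 * k + 1"
  shows "cost_max (3 * k + 1) (spider k) u \<le> depth u + k"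
proof (rule cost_max_le)
  show "num_components (3 * k + 1) (spider k) = 1"
    by (rule num_components_eq_1) (use walk_spider in \<open>auto simp: connected_in_def\<close>)
  fix v assume "v < 3 * k + 1"
  then show "gdist (3 * k + 1) (spider k) u v \<le> depth u + k"
    using gdist_le_walk[OF walk_spider[OF assms]] depth_le by (meson add_left_mono order_trans)
qed simp

lemma exists_leaf_off_legs:
  "\<exists>v<3 * k + 1. depth v = k \<and> \<not> same_leg v a \<and> \<not> same_leg v b"
proof -
  define leaf where "leaf j = 3 * (k - 1) + j" for j
  have leaf_mod: "leaf j mod 3 = j mod 3" for j
    unfolding leaf_def by (simp only: mod_mult_self4)
  have "leaf j < 3 * k + 1 \<and> depth (leaf j) = k" if "1 \<le> j" "j \<le> 3" for j
    using two_le_k that depth_leaf[of k] unfolding leaf_def by auto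
  then have "leaf 1 < 3 * k + 1 \<and> depth (leaf 1) = k" "leaf 2 < 3 * k + 1 \<and> depth (leaf 2) = k"
    "leaf 3 < 3 * k + 1 \<and> depth (leaf 3) = k"
    by simp_all
  moreover have apart: "\<not> same_leg (leaf i) c \<or> \<not> same_leg (leaf j) c" if "i mod 3 \<noteq> j mod 3" for i j c
    using that by (auto simp: same_leg_def leaf_mod)
  have "\<not> same_leg (leaf 1) c \<or> \<not> same_leg (leaf 2) c" for c
    using apart[of 1 2 c] by simp
  moreover have "\<not> same_leg (leaf 1) c \<or> \<not> same_leg (leaf 3) c" for c
    using apart[of 1 3 c] by simp
  moreover have "\<not> same_leg (leaf 2) c \<or> \<not> same_leg (leaf 3) c" for c
    using apart[of 2 3 c] by simp
  ultimately show ?thesis by blast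
qed

lemma diameter_spider_ge: "2 * k \<le> diameter (3 * k + 1) (spider k)"
proof -
  obtain u where u: "u < 3 * k + 1" "depth u = k"
    using exists_leaf_off_legs by blast
  obtain v where v: "v < 3 * k + 1" "depth v = k" "\<not> same_leg v u"
    using exists_leaf_off_legs by blast
  have "spider_dist u v = 2 * k"
    using u v same_leg_commute unfolding spider_dist_def by auto
  moreover have "min ((3 * k + 1)\<^sup>2) (spider_dist u v - spider_dist v v) \<le> gdist (3 * k + 1) (spider k) u v"
    using spider_dist_lipschitz by (intro gdist_ge_potential) (auto simp: adj_def)
  moreover have "2 * k \<le> (3 * k + 1)\<^sup>2"
    by (simp add: power2_eq_square)
  ultimately have "2 * k \<le> gdist (3 * k + 1) (spider k) u v"
    by (simp add: spider_dist_self)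
  also have "\<dots> \<le> diameter (3 * k + 1) (spider k)"
    using u v by (intro gdist_le_diameter)
  finally show ?thesis .
qed

lemma gdist_cut_subtree:
  assumes "\<forall>t\<in>T. \<not> descendant i t" "1 \<le> i"
  shows "gdist (3 * k + 1) ((spider k)(i := T)) i (i + 3) = (3 * k + 1)\<^sup>2"
  by (rule gdist_separated[where C = "{y. \<not> descendant i y}"], rule adj_fun_upd_closed)
    (use assms descendant_spider_edge same_leg_plus_3 in \<open>auto simp: descendant_def same_leg_def\<close>)

lemma gdist_cut_leg:
  assumes "T \<subseteq> {y. same_leg y i}" "1 \<le> i" "i \<le> 3"
  shows "gdist (3 * k + 1) ((spider k)(i := T)) i 0 = (3 * k + 1)\<^sup>2"
  by (rule gdist_separated[where C = "{y. same_leg y i}"], rule adj_fun_upd_closed)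
    (use assms same_leg_spider_edge same_leg_zero in \<open>auto simp: same_leg_def\<close>)

lemma gdist_deviation_far:
  assumes i: "i < 3 * k + 1" and v: "depth v = k" "\<not> same_leg v i"
    and T: "\<And>t. t \<in> T \<Longrightarrow> descendant i t \<or> depth i + k \<le> spider_dist t v + 1"
  shows "depth i + k \<le> gdist (3 * k + 1) ((spider k)(i := T)) i v"
proof -
  txt \<open>Descendants of \<open>i\<close> meet the rest of the graph only through \<open>i\<close>, so they may all sit at
    the cap \<open>depth i + k + 1\<close>.\<close>
  define f where "f x = (if descendant i x then depth i + k + 1 else min (spider_dist x v) (depth i + k + 1))"
    for x
  have fi: "f i = depth i + k"
    using v same_leg_commute[of i v] by (simp add: f_def descendant_def spider_dist_def)
  have fv: "f v = 0"
    using v(2) by (simp add: f_def descendant_def spider_dist_self)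
  have "f x \<le> f y + 1 \<and> f y \<le> f x + 1" if "x \<noteq> i" "y \<in> spider k x" for x y
  proof -
    have "descendant i x \<longleftrightarrow> descendant i y"
      using descendant_spider_edge[OF that(2,1)] by (cases "i = 0") (auto simp: descendant_def same_leg_def)
    then show ?thesis
      using spider_dist_lipschitz[OF that(2), of v] by (auto simp: f_def min_def)
  qed
  moreover have "f i \<le> f t + 1 \<and> f t \<le> f i + 1" if "t \<in> T" for t
    using T[OF that] fi by (auto simp: f_def)
  ultimately have "min ((3 * k + 1)\<^sup>2) (f i - f v) \<le> gdist (3 * k + 1) ((spider k)(i := T)) i v"
    by (intro gdist_ge_potential adj_fun_upd_potential)
  then show ?thesis
    using fi fv depth_add_le_square[OF i] by simp
qed

lemma spider_deviation_far_top:
  assumes i: "1 \<le> i" "i \<le> 3" and T: "T = {s, t}" "\<not> same_leg s i" "descendant i t"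
  shows "\<exists>v<3 * k + 1. depth i + k \<le> gdist (3 * k + 1) ((spider k)(i := T)) i v"
proof -
  obtain v where v: "v < 3 * k + 1" "depth v = k" "\<not> same_leg v i" "\<not> same_leg v s"
    using exists_leaf_off_legs by blast
  have "depth i + k \<le> spider_dist s v + 1"
    using depth_top[OF i] v(2,4) same_leg_commute[of s v] by (simp add: spider_dist_def)
  then have far: "descendant i t' \<or> depth i + k \<le> spider_dist t' v + 1" if "t' \<in> T" for t'
    using that T by auto
  have "i < 3 * k + 1"
    using i two_le_k by simp
  then have "depth i + k \<le> gdist (3 * k + 1) ((spider k)(i := T)) i v"
    using v(2,3) far by (rule gdist_deviation_far)
  with v(1) show ?thesis by blast
qed

lemma spider_deviation_far:
  assumes i: "1 \<le> i" "i \<le> 3 * k - 3" and T: "strategy (3 * k + 1) (\<lambda>x. card (spider k x)) i T"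
  shows "\<exists>v<3 * k + 1. depth i + k \<le> gdist (3 * k + 1) ((spider k)(i := T)) i v"
proof (cases "\<exists>t\<in>T. descendant i t")
  case False
  then show ?thesis
    using gdist_cut_subtree[of T i] depth_add_le_square[of i] i by (intro exI[of _ "i + 3"]) auto
next
  case True
  then obtain t where t: "t \<in> T" "descendant i t" by blast
  have T_sub: "T \<subseteq> {0..<3 * k + 1} - {i}" and card_T: "card T = card (spider k i)"
    using T by (auto simp: strategy_def)
  show ?thesis
  proof (cases "i \<le> 3")
    case False
    then have "T = {t}"
      using card_T card_spider i t(1) by (auto simp: card_Suc_eq)
    moreover obtain v where "v < 3 * k + 1" "depth v = k" "\<not> same_leg v i"
      using exists_leaf_off_legs by blast
    ultimately show ?thesis
      using gdist_deviation_far[of i v T] i t by auto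
  next
    case top: True
    show ?thesis
    proof (cases "T \<subseteq> {y. same_leg y i}")
      case True
      then show ?thesis
        using gdist_cut_leg depth_add_le_square[of i] top i by (intro exI[of _ 0]) auto
    next
      case False
      then obtain s where s: "s \<in> T" "\<not> same_leg s i" by blast
      have "finite T"
        using T_sub finite_subset by blast
      moreover have "s \<noteq> t"
        using s t by (auto simp: descendant_def)
      moreover have "card T = 2"
        using card_T card_spider two_le_k top i by simp
      ultimately have "T = {s, t}"
        using s(1) t(1) by (intro card_subset_eq[symmetric]) auto
      then show ?thesis
        using spider_deviation_far_top[OF i(1) top _ s(2) t(2)] by blast
    qed
  qed
qed

lemma spider_max_equilibrium: "max_equilibrium (3 * k + 1) (\<lambda>x. card (spider k x)) (spider k)"
  unfolding max_equilibrium_def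
proof (intro conjI allI impI)
  show "profile (3 * k + 1) (\<lambda>x. card (spider k x)) (spider k)"
    using two_le_k by (auto simp: profile_def strategy_def spider_def)
next
  fix i T
  assume i: "i < 3 * k + 1" and T: "strategy (3 * k + 1) (\<lambda>x. card (spider k x)) i T"
  show "cost_max (3 * k + 1) (spider k) i \<le> cost_max (3 * k + 1) ((spider k)(i := T)) i"
  proof (cases "1 \<le> i \<and> i \<le> 3 * k - 3")
    case True
    then obtain v where "v < 3 * k + 1" "depth i + k \<le> gdist (3 * k + 1) ((spider k)(i := T)) i v"
      using spider_deviation_far T by blast
    then show ?thesis
      using cost_max_spider_le[OF i] gdist_le_cost_max by (meson order_trans)
  next
    case False
    then have "spider k i = {}"
      using two_le_k by (auto simp: spider_def)
    moreover have "finite T"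
      using T finite_subset by (auto simp: strategy_def)
    ultimately have "T = spider k i"
      using T by (simp add: strategy_def)
    then show ?thesis by simp
  qed
qed

lemma spider_witness:
  "\<exists>b. (\<forall>x<3 * k + 1. b x \<le> 3 * k + 1 - 1) \<and> (\<Sum>x<3 * k + 1. b x) = 3 * k + 1 - 1 \<and>
     (\<exists>S. max_equilibrium (3 * k + 1) b S \<and> real (diameter (3 * k + 1) S) \<ge> 1 / 2 * real (3 * k + 1))"
proof (intro exI conjI)
  show "\<forall>x<3 * k + 1. card (spider k x) \<le> 3 * k + 1 - 1"
    using card_spider two_le_k by auto
  show "(\<Sum>x<3 * k + 1. card (spider k x)) = 3 * k + 1 - 1"
    using sum_card_spider by simp
  show "max_equilibrium (3 * k + 1) (\<lambda>x. card (spider k x)) (spider k)"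
    by (rule spider_max_equilibrium)
  have "real (2 * k) \<le> real (diameter (3 * k + 1) (spider k))"
    using diameter_spider_ge by (simp only: of_nat_le_iff)
  with two_le_k show "1 / 2 * real (3 * k + 1) \<le> real (diameter (3 * k + 1) (spider k))"
    by simp
qed

end

theorem mainTheorem3:
  shows "\<exists>c::real. c > 0 \<and>
    infinite {n::nat. \<exists>b::nat \<Rightarrow> nat. (\<forall>i<n. b i \<le> n - 1) \<and> (\<Sum>i<n. b i) = n - 1 \<and>
      (\<exists>S. max_equilibrium n b S \<and> real (diameter n S) \<ge> c * real n)}"
proof -
  let ?good = "\<lambda>(c::real) n. \<exists>b::nat \<Rightarrow> nat. (\<forall>i<n. b i \<le> n - 1) \<and> (\<Sum>i<n. b i) = n - 1 \<and>
    (\<exists>S. max_equilibrium n b S \<and> real (diameter n S) \<ge> c * real n)"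
  have good: "?good (1 / 2) (3 * (m + 2) + 1)" for m
    by (rule spider_witness) simp
  have "infinite {n. ?good (1 / 2) n}"
    unfolding infinite_nat_iff_unbounded_le
  proof
    fix m :: nat
    have "m \<le> 3 * (m + 2) + 1" by simp
    moreover have "3 * (m + 2) + 1 \<in> {n. ?good (1 / 2) n}"
      using good[of m] by (simp only: mem_Collect_eq)
    ultimately show "\<exists>n\<ge>m. n \<in> {n. ?good (1 / 2) n}" by blast
  qed
  show ?thesis
  proof (rule exI[of _ "1 / 2"], rule conjI)
    show "(1 / 2 :: real) > 0" by simp
    show "infinite {n. ?good (1 / 2) n}" by fact
  qed
qed

end
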